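(* Suppose $\mathrm r(R)=2$. The following are equivalent: (1) $R$ is a $2$-AGL ring; (2) $\mathfrak c=R:K$ and $\ell_R(K/R)=2$; (3) $S=K^2$ and $\ell_R(K/R)=2$. When these hold, $K/R\cong R/\mathfrak c$ as $R$-modules.
   Context: Let $(R,\mathfrak m)$ be a one-dimensional Cohen–Macaulay local ring possessing a canonical module $\mathrm K_R$; $I\neq R$ an ideal with $I\cong\mathrm K_R$ containing a parameter ideal $Q=(a)$ as a reduction. In the total ring of fractions set $K=I/a$, $S=R[K]$, $\mathfrak c=R:S$, with $X:Y=\{z:zY\subseteq X\}$. $R$ is $2$-AGL if $\operatorname{rank}\mathcal S_Q(I)=2$, where $\mathcal S_Q(I)=IR[It]/IR[Qt]$ is the Sally module and its rank is its length at $\mathfrak mR[Qt]$; equivalently $\ell_R(S/K)=2$. $\mathrm r(R)$ is the Cohen–Macaulay type. *)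

theory Defs
  imports Main "HOL-Library.Extended_Nat"
begin

text \<open>Setting: the ambient commutative ring 'a plays the role of the total ring of
fractions Q(R); R is a subring of it. Modules are R-submodules of Q(R).\<close>

definition subring :: "'a::comm_ring_1 set \<Rightarrow> bool" where
  "subring R \<longleftrightarrow> 0 \<in> R \<and> 1 \<in> R \<and> (\<forall>x\<in>R. \<forall>y\<in>R. x + y \<in> R \<and> x * y \<in> R) \<and> (\<forall>x\<in>R. - x \<in> R)"

definition submod :: "'a::comm_ring_1 set \<Rightarrow> 'a set \<Rightarrow> bool" where
  "submod R M \<longleftrightarrow> 0 \<in> M \<and> (\<forall>x\<in>M. \<forall>y\<in>M. x + y \<in> M) \<and> (\<forall>r\<in>R. \<forall>x\<in>M. r * x \<in> M)"

definition span :: "'a::comm_ring_1 set \<Rightarrow> 'a set \<Rightarrow> 'a set" where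
  "span R X = \<Inter>{M. submod R M \<and> X \<subseteq> M}"

definition fin_gen :: "'a::comm_ring_1 set \<Rightarrow> 'a set \<Rightarrow> bool" where
  "fin_gen R M \<longleftrightarrow> (\<exists>F. finite F \<and> M = span R F)"

definition ideal_of :: "'a::comm_ring_1 set \<Rightarrow> 'a set \<Rightarrow> bool" where
  "ideal_of R J \<longleftrightarrow> submod R J \<and> J \<subseteq> R"

definition prime_of :: "'a::comm_ring_1 set \<Rightarrow> 'a set \<Rightarrow> bool" where
  "prime_of R p \<longleftrightarrow> ideal_of R p \<and> p \<noteq> R \<and> (\<forall>x\<in>R. \<forall>y\<in>R. x * y \<in> p \<longrightarrow> x \<in> p \<or> y \<in> p)"

definition nzd_R :: "'a::comm_ring_1 set \<Rightarrow> 'a \<Rightarrow> bool" where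
  "nzd_R R x \<longleftrightarrow> x \<in> R \<and> (\<forall>y\<in>R. x * y = 0 \<longrightarrow> y = 0)"

definition regular :: "'a::comm_ring_1 \<Rightarrow> bool" where
  "regular x \<longleftrightarrow> (\<forall>y. x * y = 0 \<longrightarrow> y = 0)"

definition total_ring_of_fractions :: "'a::comm_ring_1 set \<Rightarrow> bool" where
  "total_ring_of_fractions R \<longleftrightarrow> subring R \<and>
     (\<forall>s. nzd_R R s \<longrightarrow> (\<exists>t. s * t = 1)) \<and>
     (\<forall>q. \<exists>r\<in>R. \<exists>s. nzd_R R s \<and> q * s = r)"

definition noetherian :: "'a::comm_ring_1 set \<Rightarrow> bool" where
  "noetherian R \<longleftrightarrow> (\<forall>J. ideal_of R J \<longrightarrow> fin_gen R J)"

definition local_ring :: "'a::comm_ring_1 set \<Rightarrow> 'a set \<Rightarrow> bool" where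
  "local_ring R m \<longleftrightarrow> ideal_of R m \<and> m \<noteq> R \<and> (\<forall>J. ideal_of R J \<and> J \<noteq> R \<longrightarrow> J \<subseteq> m)"

definition krull_dim_one :: "'a::comm_ring_1 set \<Rightarrow> bool" where
  "krull_dim_one R \<longleftrightarrow> (\<exists>p q. prime_of R p \<and> prime_of R q \<and> p \<subset> q) \<and>
     \<not> (\<exists>p q s. prime_of R p \<and> prime_of R q \<and> prime_of R s \<and> p \<subset> q \<and> q \<subset> s)"

text \<open>one-dimensional Cohen-Macaulay local ring (depth = 1: m contains a non-zerodivisor),
  embedded in its total ring of fractions\<close>
definition cm1_local :: "'a::comm_ring_1 set \<Rightarrow> 'a set \<Rightarrow> bool" where
  "cm1_local R m \<longleftrightarrow> total_ring_of_fractions R \<and> noetherian R \<and> local_ring R m \<and>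
     krull_dim_one R \<and> (\<exists>x\<in>m. nzd_R R x)"

definition setprod :: "'a::comm_ring_1 set \<Rightarrow> 'a set \<Rightarrow> 'a set \<Rightarrow> 'a set" where
  "setprod R X Y = span R {x * y | x y. x \<in> X \<and> y \<in> Y}"

primrec mpow :: "'a::comm_ring_1 set \<Rightarrow> 'a set \<Rightarrow> nat \<Rightarrow> 'a set" where
  "mpow R X 0 = R"
| "mpow R X (Suc n) = setprod R X (mpow R X n)"

definition colon :: "'a::comm_ring_1 set \<Rightarrow> 'a set \<Rightarrow> 'a set" where
  "colon X Y = {z. \<forall>y\<in>Y. z * y \<in> X}"

definition principal :: "'a::comm_ring_1 set \<Rightarrow> 'a \<Rightarrow> 'a set" where
  "principal R x = {r * x | r. r \<in> R}"

text \<open>length of the R-module M/N (N \<subseteq> M): supremum of lengths of strict chains of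
  R-submodules from N to M (infinity if unbounded)\<close>
definition len :: "'a::comm_ring_1 set \<Rightarrow> 'a set \<Rightarrow> 'a set \<Rightarrow> enat" where
  "len R N M = Sup {enat n | n. \<exists>c. c 0 = N \<and> c n = M \<and> (\<forall>i\<le>n. submod R (c i)) \<and>
      (\<forall>i<n. c i \<subset> c (Suc i))}"

definition frac_ideal :: "'a::comm_ring_1 set \<Rightarrow> 'a set \<Rightarrow> bool" where
  "frac_ideal R M \<longleftrightarrow> submod R M \<and> fin_gen R M \<and> (\<exists>x\<in>M. regular x)"

text \<open>canonical fractional ideal (Herzog-Kunz characterisation of omega isomorphic to K_R)\<close>
definition canonical_frac_ideal :: "'a::comm_ring_1 set \<Rightarrow> 'a set \<Rightarrow> bool" where
  "canonical_frac_ideal R w \<longleftrightarrow> frac_ideal R w \<and>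
     (\<forall>J. frac_ideal R J \<longrightarrow> colon w (colon w J) = J)"

text \<open>Cohen-Macaulay type t: socle dimension of R/(x) for parameters x\<close>
definition cm_type :: "'a::comm_ring_1 set \<Rightarrow> 'a set \<Rightarrow> enat \<Rightarrow> bool" where
  "cm_type R m t \<longleftrightarrow> (\<forall>x\<in>m. nzd_R R x \<longrightarrow>
      len R (principal R x) (colon (principal R x) m \<inter> R) = t)"

definition parameter :: "'a::comm_ring_1 set \<Rightarrow> 'a set \<Rightarrow> 'a \<Rightarrow> bool" where
  "parameter R m a \<longleftrightarrow> a \<in> m \<and> (\<exists>n. mpow R m n \<subseteq> principal R a)"

definition reduction :: "'a::comm_ring_1 set \<Rightarrow> 'a \<Rightarrow> 'a set \<Rightarrow> bool" where
  "reduction R a I \<longleftrightarrow> principal R a \<subseteq> I \<and>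
     (\<exists>n. mpow R I (Suc n) = setprod R (principal R a) (mpow R I n))"

definition ring_gen :: "'a::comm_ring_1 set \<Rightarrow> 'a set \<Rightarrow> 'a set" where
  "ring_gen R K = \<Inter>{T. subring T \<and> R \<union> K \<subseteq> T}"

definition frac_div :: "'a::comm_ring_1 set \<Rightarrow> 'a \<Rightarrow> 'a set" where
  "frac_div I a = {x. a * x \<in> I}"

definition two_AGL :: "'a::comm_ring_1 set \<Rightarrow> 'a set \<Rightarrow> 'a \<Rightarrow> bool" where
  "two_AGL R I a \<longleftrightarrow> len R (frac_div I a) (ring_gen R (frac_div I a)) = 2"

text \<open>A/B \<cong> C/D as R-modules (B \<subseteq> A, D \<subseteq> C): an R-linear map A \<rightarrow> C/D (given
  by representatives), surjective, with kernel B\<close>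
definition quot_iso :: "'a::comm_ring_1 set \<Rightarrow> 'a set \<Rightarrow> 'a set \<Rightarrow> 'a set \<Rightarrow> 'a set \<Rightarrow> bool" where
  "quot_iso R A B C D \<longleftrightarrow> (\<exists>f. (\<forall>x\<in>A. f x \<in> C) \<and>
     (\<forall>x\<in>A. \<forall>y\<in>A. f (x + y) - f x - f y \<in> D) \<and>
     (\<forall>r\<in>R. \<forall>x\<in>A. f (r * x) - r * f x \<in> D) \<and>
     (\<forall>z\<in>C. \<exists>x\<in>A. z - f x \<in> D) \<and>
     (\<forall>x\<in>A. f x \<in> D \<longleftrightarrow> x \<in> B))"

end

theory Submission
  imports Defs
begin

text \<open>
  The fractional ideal \<open>K = I/a\<close> is canonical, contains \<open>R\<close> and satisfies \<open>K : K = R\<close>, so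
  \<open>X \<mapsto> K : X\<close> reverses inclusions and preserves lengths. It turns \<open>mK \<subseteq> K\<close> into
  \<open>R \<subseteq> R : m\<close>, so type two means \<open>l(K/mK) = 2\<close> and, by Nakayama, \<open>K = R + Rg\<close>. Multiplication
  by \<open>g\<close> matches the modules between \<open>R\<close> and \<open>K\<close> with the ideals between \<open>R : K\<close> and \<open>R\<close>,
  whence \<open>l(K/R) = l(R/(R : K))\<close> and \<open>K/R \<cong> R/(R : K)\<close>. Duality also gives \<open>l(S/K) = l(R/c)\<close> and
  \<open>c = R : K \<longleftrightarrow> S = K\<^sup>2\<close>. Finally, if \<open>l(R/c) = 2\<close> but \<open>c \<noteq> R : K\<close>, the chain
  \<open>c \<subset> R : K \<subseteq> m \<subset> R\<close> forces \<open>R : K = m\<close>. Then \<open>mK \<subseteq> m\<close>, since otherwise \<open>K\<close> would be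
  principal and \<open>R\<close> Gorenstein; hence \<open>R : K\<^sup>2 = m : K = R : K\<close>, and duality yields \<open>K\<^sup>3 = K\<^sup>2\<close>,
  i.e. \<open>S = K\<^sup>2\<close> and \<open>c = R : K\<close> after all.
\<close>

section \<open>Submodules of the total ring of fractions\<close>

lemma submod_span: "submod R (span R X)"
  unfolding span_def submod_def by blast

lemma span_superset: "X \<subseteq> span R X"
  unfolding span_def by blast

lemma span_least: "submod R M \<Longrightarrow> X \<subseteq> M \<Longrightarrow> span R X \<subseteq> M"
  unfolding span_def by blast

lemma span_unique:
  assumes "submod R M" "X \<subseteq> M" "\<And>N. submod R N \<Longrightarrow> X \<subseteq> N \<Longrightarrow> M \<subseteq> N"
  shows "span R X = M"
  using assms span_least span_superset submod_span by (metis subset_antisym)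

lemma submodD:
  assumes "submod R M"
  shows "0 \<in> M" "x \<in> M \<Longrightarrow> y \<in> M \<Longrightarrow> x + y \<in> M" "r \<in> R \<Longrightarrow> x \<in> M \<Longrightarrow> r * x \<in> M"
  using assms unfolding submod_def by auto

lemma submod_mult_right: "submod R M \<Longrightarrow> r \<in> R \<Longrightarrow> x \<in> M \<Longrightarrow> x * r \<in> M"
  using submodD(3)[of R M r x] by (simp add: mult.commute)

lemma submod_zero: "submod R {0}"
  unfolding submod_def by simp

lemma submod_preimage_mult: "submod R M \<Longrightarrow> submod R {x. y * x \<in> M}"
  unfolding submod_def by (auto simp: distrib_left mult.left_commute)

lemma subringD:
  assumes "subring R"
  shows "0 \<in> R" "1 \<in> R" "x \<in> R \<Longrightarrow> y \<in> R \<Longrightarrow> x + y \<in> R" "x \<in> R \<Longrightarrow> y \<in> R \<Longrightarrow> x * y \<in> R"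
    "x \<in> R \<Longrightarrow> - x \<in> R"
  using assms unfolding subring_def by auto

lemma submod_subring: "subring T \<Longrightarrow> R \<subseteq> T \<Longrightarrow> submod R T"
  unfolding subring_def submod_def by auto

lemma submod_uminus:
  assumes "subring R" "submod R M" "x \<in> M"
  shows "- x \<in> M"
  using submodD(3)[OF assms(2) subringD(5)[OF assms(1) subringD(2)[OF assms(1)]] assms(3)] by simp

lemma submod_diff:
  assumes "subring R" "submod R M" "x \<in> M" "y \<in> M"
  shows "x - y \<in> M"
  using submodD(2)[OF assms(2,3) submod_uminus[OF assms(1,2,4)]] by simp

lemma subring_ring_gen: "subring (ring_gen R X)"
  unfolding ring_gen_def subring_def by auto

lemma ring_gen_superset: "R \<union> X \<subseteq> ring_gen R X"
  unfolding ring_gen_def by blast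

definition smul :: "'a::comm_ring_1 \<Rightarrow> 'a set \<Rightarrow> 'a set" where
  "smul c A = (\<lambda>x. c * x) ` A"

lemma smul_memI: "x \<in> A \<Longrightarrow> c * x \<in> smul c A"
  unfolding smul_def by blast

lemma smul_mem_iff_unit: "c * d = 1 \<Longrightarrow> x \<in> smul c A \<longleftrightarrow> d * x \<in> A"
  unfolding smul_def
  by (auto simp: mult.assoc[symmetric] mult.commute[of d c])
     (metis mult.assoc mult_1_left image_eqI)

lemma smul_smul: "smul c (smul d A) = smul (c * d) A"
  unfolding smul_def by (auto simp: image_image mult.assoc)

lemma smul_one: "smul 1 A = A"
  unfolding smul_def by simp

lemma smul_cancel: "c * d = 1 \<Longrightarrow> smul d (smul c A) = A"
  by (simp add: smul_smul mult.commute smul_one)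

lemma smul_mono: "A \<subseteq> B \<Longrightarrow> smul c A \<subseteq> smul c B"
  unfolding smul_def by auto

lemma submod_smul: "submod R M \<Longrightarrow> submod R (smul c M)"
  unfolding submod_def smul_def
  by (auto simp: distrib_left[symmetric] mult.left_commute[of _ c]) (metis image_eqI mult_zero_right)

lemma span_smul: "span R (smul c X) = smul c (span R X)"
proof (rule subset_antisym)
  show "span R (smul c X) \<subseteq> smul c (span R X)"
    by (rule span_least[OF submod_smul[OF submod_span]]) (rule smul_mono[OF span_superset])
  have "span R X \<subseteq> {x. c * x \<in> span R (smul c X)}"
    by (rule span_least[OF submod_preimage_mult[OF submod_span]])
      (use span_superset[of "smul c X" R] in \<open>auto simp: smul_def\<close>)
  then show "smul c (span R X) \<subseteq> span R (smul c X)"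
    by (auto simp: smul_def)
qed

lemma fin_gen_smul: "fin_gen R X \<Longrightarrow> fin_gen R (smul c X)"
  unfolding fin_gen_def by (metis finite_imageI smul_def span_smul)

lemma frac_div_eq_smul: "a * u = 1 \<Longrightarrow> frac_div I a = smul u I"
  unfolding frac_div_def using smul_mem_iff_unit[of u a _ I] by (auto simp: mult.commute)

lemma principal_eq_smul: "principal R x = smul x R"
  unfolding principal_def smul_def by (auto simp: mult.commute)

definition msum :: "'a::comm_ring_1 set \<Rightarrow> 'a set \<Rightarrow> 'a set" where
  "msum A B = {x + y | x y. x \<in> A \<and> y \<in> B}"

lemma submod_msum:
  assumes A: "submod R A" and B: "submod R B"
  shows "submod R (msum A B)"
  unfolding submod_def
proof (intro conjI ballI)
  show "0 \<in> msum A B"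
    using submodD(1)[OF A] submodD(1)[OF B] unfolding msum_def by force
next
  fix x y assume "x \<in> msum A B" "y \<in> msum A B"
  then obtain x1 x2 y1 y2 where xy: "x1 \<in> A" "x2 \<in> B" "y1 \<in> A" "y2 \<in> B"
    and "x = x1 + x2" "y = y1 + y2"
    unfolding msum_def by blast
  then have "x + y = (x1 + y1) + (x2 + y2)"
    by (simp add: algebra_simps)
  with submodD(2)[OF A xy(1,3)] submodD(2)[OF B xy(2,4)] show "x + y \<in> msum A B"
    unfolding msum_def by blast
next
  fix r x assume r: "r \<in> R" and "x \<in> msum A B"
  then obtain x1 x2 where x: "x1 \<in> A" "x2 \<in> B" and "x = x1 + x2"
    unfolding msum_def by blast
  then have "r * x = r * x1 + r * x2"
    by (simp add: algebra_simps)
  with submodD(3)[OF A r x(1)] submodD(3)[OF B r x(2)] show "r * x \<in> msum A B"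
    unfolding msum_def by blast
qed

lemma msum_superset_left: "0 \<in> B \<Longrightarrow> A \<subseteq> msum A B"
  unfolding msum_def by force

lemma msum_superset_right: "0 \<in> A \<Longrightarrow> B \<subseteq> msum A B"
  unfolding msum_def by force

lemma msum_least: "submod R M \<Longrightarrow> A \<subseteq> M \<Longrightarrow> B \<subseteq> M \<Longrightarrow> msum A B \<subseteq> M"
  unfolding msum_def submod_def by auto

lemma msum_mono: "A \<subseteq> A' \<Longrightarrow> B \<subseteq> B' \<Longrightarrow> msum A B \<subseteq> msum A' B'"
  unfolding msum_def by blast

lemma msum_commute: "msum A B = msum B A"
  unfolding msum_def by (auto; metis add.commute)

lemma msum_assoc: "msum (msum A B) C = msum A (msum B C)"
proof (intro set_eqI iffI)
  fix x assume "x \<in> msum (msum A B) C"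
  then obtain a b c where "a \<in> A" "b \<in> B" "c \<in> C" "x = a + (b + c)"
    unfolding msum_def by (auto simp: add.assoc)
  then show "x \<in> msum A (msum B C)"
    unfolding msum_def by blast
next
  fix x assume "x \<in> msum A (msum B C)"
  then obtain a b c where "a \<in> A" "b \<in> B" "c \<in> C" "x = (a + b) + c"
    unfolding msum_def by (auto simp: add.assoc)
  then show "x \<in> msum (msum A B) C"
    unfolding msum_def by blast
qed

lemma span_insert:
  assumes "subring R"
  shows "span R (insert f F) = msum (smul f R) (span R F)"
proof (rule span_unique)
  have R: "submod R R" by (rule submod_subring[OF assms subset_refl])
  show "submod R (msum (smul f R) (span R F))"
    by (rule submod_msum[OF submod_smul[OF R] submod_span])
  have "f \<in> smul f R"
    using smul_memI[OF subringD(2)[OF assms], of f] by simp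
  also have "smul f R \<subseteq> msum (smul f R) (span R F)"
    by (rule msum_superset_left[OF submodD(1)[OF submod_span]])
  finally have "f \<in> msum (smul f R) (span R F)" .
  moreover have "F \<subseteq> msum (smul f R) (span R F)"
    using span_superset msum_superset_right[OF submodD(1)[OF submod_smul[OF R]]] by (rule order_trans)
  ultimately show "insert f F \<subseteq> msum (smul f R) (span R F)"
    by simp
  fix N assume N: "submod R N" "insert f F \<subseteq> N"
  have "smul f R \<subseteq> N"
    unfolding smul_def using submod_mult_right[OF N(1)] N(2) by auto
  moreover have "span R F \<subseteq> N"
    using span_least[OF N(1)] N(2) by simp
  ultimately show "msum (smul f R) (span R F) \<subseteq> N"
    by (rule msum_least[OF N(1)])
qed

lemma span_empty: "span R {} = {0}"
  by (rule span_unique[OF submod_zero]) (auto dest: submodD(1))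

lemma submod_setprod: "submod R (setprod R X Y)"
  unfolding setprod_def by (rule submod_span)

lemma setprod_memI: "x \<in> X \<Longrightarrow> y \<in> Y \<Longrightarrow> x * y \<in> setprod R X Y"
  unfolding setprod_def by (rule span_superset[THEN subsetD]) blast

lemma setprod_least:
  "submod R M \<Longrightarrow> (\<And>x y. x \<in> X \<Longrightarrow> y \<in> Y \<Longrightarrow> x * y \<in> M) \<Longrightarrow> setprod R X Y \<subseteq> M"
  unfolding setprod_def by (rule span_least) auto

lemma setprod_mono: "X \<subseteq> X' \<Longrightarrow> Y \<subseteq> Y' \<Longrightarrow> setprod R X Y \<subseteq> setprod R X' Y'"
  by (rule setprod_least[OF submod_setprod]) (auto intro: setprod_memI)

lemma setprod_commute: "setprod R X Y = setprod R Y X"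
  unfolding setprod_def by (metis (no_types, lifting) mult.commute)

lemma setprod_subring_left:
  assumes "subring R" "submod R M"
  shows "setprod R R M = M"
proof
  show "setprod R R M \<subseteq> M"
    by (rule setprod_least[OF assms(2)]) (rule submodD(3)[OF assms(2)])
  show "M \<subseteq> setprod R R M"
    using setprod_memI[OF subringD(2)[OF assms(1)], of _ M R] by force
qed

lemma setprod_smul: "setprod R (smul c X) (smul d Y) = smul (c * d) (setprod R X Y)"
proof -
  have prod: "(c * x) * (d * y) = (c * d) * (x * y)" for x y
    by (simp add: algebra_simps)
  have "{x * y | x y. x \<in> smul c X \<and> y \<in> smul d Y} = smul (c * d) {x * y | x y. x \<in> X \<and> y \<in> Y}"
  proof (intro set_eqI iffI)
    fix z assume "z \<in> {x * y | x y. x \<in> smul c X \<and> y \<in> smul d Y}"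
    then obtain x y where "x * y \<in> {x * y | x y. x \<in> X \<and> y \<in> Y}" and "z = (c * x) * (d * y)"
      unfolding smul_def by blast
    then show "z \<in> smul (c * d) {x * y | x y. x \<in> X \<and> y \<in> Y}"
      unfolding prod by (simp add: smul_memI)
  next
    fix z assume "z \<in> smul (c * d) {x * y | x y. x \<in> X \<and> y \<in> Y}"
    then obtain x y where "c * x \<in> smul c X" "d * y \<in> smul d Y" and "z = (c * d) * (x * y)"
      unfolding smul_def by blast
    then show "z \<in> {x * y | x y. x \<in> smul c X \<and> y \<in> smul d Y}"
      unfolding prod[symmetric] by blast
  qed
  then show ?thesis
    unfolding setprod_def by (simp add: span_smul)
qed

section \<open>Colon modules, fractional ideals and powers\<close>

lemma submod_colon: "submod R C \<Longrightarrow> submod R (colon C X)"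
  unfolding submod_def colon_def by (auto simp: distrib_right mult.assoc)

lemma colon_antimono: "X \<subseteq> Y \<Longrightarrow> colon C Y \<subseteq> colon C X"
  unfolding colon_def by auto

lemma colon_setprod:
  assumes C: "submod R C"
  shows "colon C (setprod R X Y) = colon (colon C X) Y"
proof (intro set_eqI iffI)
  fix z assume z: "z \<in> colon C (setprod R X Y)"
  have "z * y * x \<in> C" if "x \<in> X" "y \<in> Y" for x y
  proof -
    have "z * (x * y) \<in> C"
      using z setprod_memI[OF that] unfolding colon_def by blast
    then show ?thesis
      by (simp add: ac_simps)
  qed
  then show "z \<in> colon (colon C X) Y"
    unfolding colon_def by blast
next
  fix z assume z: "z \<in> colon (colon C X) Y"
  have "setprod R X Y \<subseteq> {w. z * w \<in> C}"
  proof (rule setprod_least[OF submod_preimage_mult[OF C]])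
    fix x y assume "x \<in> X" "y \<in> Y"
    then have "z * y * x \<in> C"
      using z unfolding colon_def by blast
    then show "x * y \<in> {w. z * w \<in> C}"
      by (simp add: ac_simps)
  qed
  then show "z \<in> colon C (setprod R X Y)"
    unfolding colon_def by blast
qed

lemma colon_smul_left:
  assumes "c * d = 1"
  shows "colon (smul c C) X = smul c (colon C X)"
proof -
  have "z \<in> colon (smul c C) X \<longleftrightarrow> d * z \<in> colon C X" for z
    unfolding colon_def by (simp add: smul_mem_iff_unit[OF assms] mult.assoc)
  then show ?thesis
    using smul_mem_iff_unit[OF assms] by blast
qed

lemma colon_smul_right:
  assumes "c * d = 1"
  shows "colon C (smul c X) = smul d (colon C X)"
proof -
  have "z \<in> colon C (smul c X) \<longleftrightarrow> c * z \<in> colon C X" for z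
    unfolding colon_def smul_def by (auto simp: ac_simps)
  moreover have "d * c = 1"
    using assms by (simp add: mult.commute)
  ultimately show ?thesis
    using smul_mem_iff_unit by blast
qed

lemma regular_mult: "regular x \<Longrightarrow> regular y \<Longrightarrow> regular (x * y)"
  unfolding regular_def by (metis mult.assoc)

lemma regular_if_unit: "c * d = 1 \<Longrightarrow> regular c"
  unfolding regular_def by (metis mult.left_commute mult_1_right mult_zero_right)

lemma frac_ideal_smul:
  assumes "c * d = 1" "frac_ideal R X"
  shows "frac_ideal R (smul c X)"
proof -
  obtain x where "x \<in> X" "regular x"
    using assms(2) unfolding frac_ideal_def by blast
  then have "c * x \<in> smul c X" "regular (c * x)"
    using smul_memI regular_mult regular_if_unit[OF assms(1)] by blast+
  then show ?thesis
    using assms(2) submod_smul fin_gen_smul unfolding frac_ideal_def by blast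
qed

lemma canonical_frac_ideal_smul:
  assumes cd: "c * d = 1" and C: "canonical_frac_ideal R C"
  shows "canonical_frac_ideal R (smul c C)"
  unfolding canonical_frac_ideal_def
proof (intro conjI allI impI)
  show "frac_ideal R (smul c C)"
    using C frac_ideal_smul[OF cd] unfolding canonical_frac_ideal_def by blast
  fix J assume "frac_ideal R J"
  then have "colon C (colon C J) = J"
    using C unfolding canonical_frac_ideal_def by blast
  then show "colon (smul c C) (colon (smul c C) J) = J"
    by (simp add: colon_smul_left[OF cd] colon_smul_right[OF cd] smul_smul cd mult.commute[of d c] smul_one)
qed

lemma mpow_smul: "mpow R (smul c X) n = smul (c ^ n) (mpow R X n)"
  by (induction n) (simp_all add: smul_one setprod_smul)

lemma submod_mpow: "subring R \<Longrightarrow> submod R (mpow R X n)"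
  by (cases n) (simp_all add: submod_subring submod_setprod)

lemma ideal_mpow:
  assumes R: "subring R" and I: "ideal_of R I"
  shows "ideal_of R (mpow R I n)"
proof (induction n)
  case 0
  then show ?case
    unfolding ideal_of_def by (simp add: submod_subring[OF R])
next
  case (Suc n)
  have "setprod R I (mpow R I n) \<subseteq> R"
    by (rule setprod_least[OF submod_subring[OF R subset_refl]])
      (use I Suc subringD(4)[OF R] in \<open>auto simp: ideal_of_def\<close>)
  then show ?case
    unfolding ideal_of_def by (simp add: submod_setprod)
qed

lemma pow_in_mpow: "1 \<in> R \<Longrightarrow> x \<in> X \<Longrightarrow> x ^ n \<in> mpow R X n"
  by (induction n) (simp_all add: setprod_memI)

lemma mpow_one: "subring R \<Longrightarrow> submod R X \<Longrightarrow> mpow R X 1 = X"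
  by (simp add: setprod_commute setprod_subring_left)

lemma mpow_two: "subring R \<Longrightarrow> submod R X \<Longrightarrow> mpow R X 2 = setprod R X X"
  using mpow_one[of R X] by (simp add: numeral_2_eq_2)

lemma mpow_Suc_mono:
  assumes R: "subring R" and RX: "R \<subseteq> X"
  shows "mpow R X n \<subseteq> mpow R X (Suc n)"
proof (induction n)
  case 0
  have "r * 1 \<in> setprod R X R" if "r \<in> R" for r
    using setprod_memI[of r X 1 R] RX that subringD(2)[OF R] by blast
  then show ?case
    by auto
next
  case (Suc n)
  then show ?case
    by (simp add: setprod_mono)
qed

lemma mpow_mono: "subring R \<Longrightarrow> R \<subseteq> X \<Longrightarrow> i \<le> j \<Longrightarrow> mpow R X i \<subseteq> mpow R X j"
  by (rule lift_Suc_mono_le[of "mpow R X"]) (rule mpow_Suc_mono)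

lemma mpow_stable:
  assumes "mpow R X (Suc N) = mpow R X N"
  shows "mpow R X (N + k) = mpow R X N"
proof (induction k)
  case (Suc k)
  then show ?case
    using assms by simp
qed simp

lemma mpow_mult:
  assumes R: "subring R"
  shows "x \<in> mpow R X i \<Longrightarrow> y \<in> mpow R X j \<Longrightarrow> x * y \<in> mpow R X (i + j)"
proof (induction i arbitrary: x)
  case 0
  then show ?case
    using submodD(3)[OF submod_mpow[OF R]] by simp
next
  case (Suc i)
  have "setprod R X (mpow R X i) \<subseteq> {w. y * w \<in> mpow R X (Suc i + j)}"
  proof (rule setprod_least[OF submod_preimage_mult[OF submod_mpow[OF R]]])
    fix x' z assume "x' \<in> X" "z \<in> mpow R X i"
    then have "x' * (z * y) \<in> mpow R X (Suc i + j)"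
      using Suc.IH[of z] Suc.prems(2) setprod_memI by simp
    then show "x' * z \<in> {w. y * w \<in> mpow R X (Suc i + j)}"
      by (simp add: ac_simps)
  qed
  then show ?case
    using Suc.prems(1) by (auto simp: mult.commute)
qed

lemma mpow_subset_subring:
  assumes T: "subring T" and RXT: "R \<union> X \<subseteq> T"
  shows "mpow R X n \<subseteq> T"
proof (induction n)
  case 0
  then show ?case
    using RXT by simp
next
  case (Suc n)
  have "setprod R X (mpow R X n) \<subseteq> T"
  proof (rule setprod_least[OF submod_subring[OF T]])
    show "R \<subseteq> T"
      using RXT by simp
    fix x y assume "x \<in> X" "y \<in> mpow R X n"
    then have "x \<in> T" "y \<in> T"
      using RXT Suc.IH by auto
    then show "x * y \<in> T"
      by (rule subringD(4)[OF T])
  qed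
  then show ?case
    by simp
qed

lemma subring_mpow_stable:
  assumes R: "subring R" and RX: "R \<subseteq> X" and stable: "mpow R X (Suc N) = mpow R X N"
  shows "subring (mpow R X N)"
  unfolding subring_def
proof (intro conjI ballI)
  show "0 \<in> mpow R X N" "1 \<in> mpow R X N"
    using mpow_mono[OF R RX, of 0 N] subringD(1,2)[OF R] by auto
  fix x y assume xy: "x \<in> mpow R X N" "y \<in> mpow R X N"
  then show "x + y \<in> mpow R X N"
    using submodD(2)[OF submod_mpow[OF R]] by blast
  show "x * y \<in> mpow R X N"
    using mpow_mult[OF R xy] mpow_stable[OF stable, of N] by simp
next
  fix x assume "x \<in> mpow R X N"
  then show "- x \<in> mpow R X N"
    by (rule submod_uminus[OF R submod_mpow[OF R]])
qed

lemma ring_gen_eq_mpow: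
  assumes R: "subring R" and RX: "R \<subseteq> X" and stable: "mpow R X (Suc N) = mpow R X N"
  shows "ring_gen R X = mpow R X N"
proof
  have "X \<subseteq> mpow R X N"
  proof -
    have "x * 1 \<in> setprod R X R" if "x \<in> X" for x
      using setprod_memI that subringD(2)[OF R] by blast
    then have "X \<subseteq> mpow R X 1"
      by auto
    also have "\<dots> \<subseteq> mpow R X (N + 1)"
      by (rule mpow_mono[OF R RX]) simp
    finally show ?thesis
      using stable by simp
  qed
  then show "ring_gen R X \<subseteq> mpow R X N"
    unfolding ring_gen_def using subring_mpow_stable[OF assms] mpow_mono[OF R RX, of 0 N] by auto
  show "mpow R X N \<subseteq> ring_gen R X"
    by (rule mpow_subset_subring[OF subring_ring_gen ring_gen_superset])
qed

section \<open>Length\<close>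

definition mod_chain :: "'a::comm_ring_1 set \<Rightarrow> (nat \<Rightarrow> 'a set) \<Rightarrow> nat \<Rightarrow> 'a set \<Rightarrow> 'a set \<Rightarrow> bool" where
  "mod_chain R c n N M \<longleftrightarrow>
     c 0 = N \<and> c n = M \<and> (\<forall>i\<le>n. submod R (c i)) \<and> (\<forall>i<n. c i \<subset> c (Suc i))"

lemma len_eq_Sup_chains: "len R N M = Sup {enat n | n. \<exists>c. mod_chain R c n N M}"
  unfolding len_def mod_chain_def by simp

lemma len_ge_chain: "mod_chain R c n N M \<Longrightarrow> enat n \<le> len R N M"
  unfolding len_eq_Sup_chains by (rule Sup_upper) blast

lemma len_le_bound: "(\<And>c n. mod_chain R c n N M \<Longrightarrow> n \<le> k) \<Longrightarrow> len R N M \<le> enat k"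
  unfolding len_eq_Sup_chains by (rule Sup_least) auto

lemma mod_chain_mono:
  assumes c: "mod_chain R c n N M" and "i \<le> j" "j \<le> n"
  shows "c i \<subseteq> c j"
  using assms(2,3)
proof (induction j rule: dec_induct)
  case (step j)
  then have "c j \<subset> c (Suc j)"
    using c unfolding mod_chain_def by simp
  with step show ?case
    by simp
qed simp

lemma mod_chain_between:
  assumes c: "mod_chain R c n N M" and "i \<le> n"
  shows "N \<subseteq> c i" "c i \<subseteq> M" "submod R (c i)"
  using mod_chain_mono[OF c, of 0 i] mod_chain_mono[OF c, of i n] c assms(2)
  unfolding mod_chain_def by auto

lemma len_le_of_mono_inverse:
  assumes inv: "\<And>L. submod R L \<Longrightarrow> N \<subseteq> L \<Longrightarrow> L \<subseteq> M \<Longrightarrow> submod R' (\<Phi> L) \<and> \<Psi> (\<Phi> L) = L"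
    and mono: "\<And>L L'. L \<subseteq> L' \<Longrightarrow> \<Phi> L \<subseteq> \<Phi> L'"
  shows "len R N M \<le> len R' (\<Phi> N) (\<Phi> M)"
  unfolding len_eq_Sup_chains
proof (rule Sup_subset_mono, rule subsetI)
  fix x assume "x \<in> {enat n |n. \<exists>c. mod_chain R c n N M}"
  then obtain n c where x: "x = enat n" and c: "mod_chain R c n N M"
    by blast
  have "mod_chain R' (\<lambda>i. \<Phi> (c i)) n (\<Phi> N) (\<Phi> M)"
    unfolding mod_chain_def
  proof (intro conjI allI impI)
    show "\<Phi> (c 0) = \<Phi> N" "\<Phi> (c n) = \<Phi> M"
      using c unfolding mod_chain_def by simp_all
    fix i assume "i \<le> n"
    then show "submod R' (\<Phi> (c i))"
      using inv mod_chain_between[OF c] by blast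
  next
    fix i assume i: "i < n"
    then have step: "c i \<subset> c (Suc i)"
      using c unfolding mod_chain_def by simp
    have "\<Psi> (\<Phi> (c i)) = c i" "\<Psi> (\<Phi> (c (Suc i))) = c (Suc i)"
      using inv mod_chain_between[OF c, of i] mod_chain_between[OF c, of "Suc i"] i by auto
    with step mono[of "c i" "c (Suc i)"] show "\<Phi> (c i) \<subset> \<Phi> (c (Suc i))"
      by (metis psubset_eq)
  qed
  then show "x \<in> {enat n |n. \<exists>c. mod_chain R' c n (\<Phi> N) (\<Phi> M)}"
    using x by blast
qed

lemma len_le_of_antimono_inverse:
  assumes inv: "\<And>L. submod R L \<Longrightarrow> N \<subseteq> L \<Longrightarrow> L \<subseteq> M \<Longrightarrow> submod R' (\<Phi> L) \<and> \<Psi> (\<Phi> L) = L"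
    and anti: "\<And>L L'. L \<subseteq> L' \<Longrightarrow> \<Phi> L' \<subseteq> \<Phi> L"
  shows "len R N M \<le> len R' (\<Phi> M) (\<Phi> N)"
  unfolding len_eq_Sup_chains
proof (rule Sup_subset_mono, rule subsetI)
  fix x assume "x \<in> {enat n |n. \<exists>c. mod_chain R c n N M}"
  then obtain n c where x: "x = enat n" and c: "mod_chain R c n N M"
    by blast
  have "mod_chain R' (\<lambda>i. \<Phi> (c (n - i))) n (\<Phi> M) (\<Phi> N)"
    unfolding mod_chain_def
  proof (intro conjI allI impI)
    show "\<Phi> (c (n - 0)) = \<Phi> M" "\<Phi> (c (n - n)) = \<Phi> N"
      using c unfolding mod_chain_def by simp_all
    fix i assume "i \<le> n"
    then show "submod R' (\<Phi> (c (n - i)))"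
      using inv mod_chain_between[OF c, of "n - i"] by simp
  next
    fix i assume i: "i < n"
    then have "c (n - Suc i) \<subset> c (Suc (n - Suc i))"
      using c unfolding mod_chain_def by simp
    then have step: "c (n - Suc i) \<subset> c (n - i)"
      using i by (simp add: Suc_diff_Suc)
    have "\<Psi> (\<Phi> (c (n - i))) = c (n - i)" "\<Psi> (\<Phi> (c (n - Suc i))) = c (n - Suc i)"
      using inv mod_chain_between[OF c, of "n - i"] mod_chain_between[OF c, of "n - Suc i"] by auto
    with step anti[of "c (n - Suc i)" "c (n - i)"] show "\<Phi> (c (n - i)) \<subset> \<Phi> (c (n - Suc i))"
      by (metis psubset_eq)
  qed
  then show "x \<in> {enat n |n. \<exists>c. mod_chain R' c n (\<Phi> M) (\<Phi> N)}"
    using x by blast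
qed

lemma three_le_len:
  assumes "submod R N0" "submod R N1" "submod R N2" "submod R N3"
    and "N0 \<subset> N1" "N1 \<subset> N2" "N2 \<subset> N3"
  shows "3 \<le> len R N0 N3"
proof -
  let ?c = "\<lambda>i::nat. if i = 0 then N0 else if i = 1 then N1 else if i = 2 then N2 else N3"
  have "mod_chain R ?c 3 N0 N3"
    unfolding mod_chain_def
  proof (intro conjI allI impI)
    fix i :: nat assume "i < 3"
    then have "i = 0 \<or> i = 1 \<or> i = 2"
      by auto
    then show "?c i \<subset> ?c (Suc i)"
      using assms by auto
  qed (use assms in auto)
  from len_ge_chain[OF this] show ?thesis
    by (simp add: numeral_eq_enat)
qed

lemma len_smul:
  assumes cd: "c * d = 1"
  shows "len R (smul c N) (smul c M) = len R N M"
proof (rule antisym)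
  have dc: "d * c = 1"
    using cd by (simp add: mult.commute)
  show "len R N M \<le> len R (smul c N) (smul c M)"
    by (rule len_le_of_mono_inverse[where \<Psi> = "smul d"])
      (auto simp: submod_smul smul_cancel[OF cd] smul_mono)
  have "len R (smul c N) (smul c M) \<le> len R (smul d (smul c N)) (smul d (smul c M))"
    by (rule len_le_of_mono_inverse[where \<Psi> = "smul c"])
      (auto simp: submod_smul smul_cancel[OF dc] smul_mono)
  then show "len R (smul c N) (smul c M) \<le> len R N M"
    by (simp add: smul_cancel[OF cd])
qed

section \<open>The module \<open>R + g R\<close>\<close>

lemma mem_msum_smul: "x \<in> msum A (smul g B) \<longleftrightarrow> (\<exists>a\<in>A. \<exists>b\<in>B. x = a + g * b)"
  unfolding msum_def smul_def by auto

context
  fixes R :: "'a::comm_ring_1 set" and g :: 'a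
  assumes R: "subring R"
begin

private lemma R_zero: "0 \<in> R"
  and R_add: "x \<in> R \<Longrightarrow> y \<in> R \<Longrightarrow> x + y \<in> R"
  and R_mult: "x \<in> R \<Longrightarrow> y \<in> R \<Longrightarrow> x * y \<in> R"
  and R_diff: "x \<in> R \<Longrightarrow> y \<in> R \<Longrightarrow> x - y \<in> R"
  using subringD[OF R] submod_diff[OF R submod_subring[OF R subset_refl]] by auto

lemma submod_preimage_smul: "submod R L \<Longrightarrow> submod R {s \<in> R. g * s \<in> L}"
  using submod_preimage_mult[of R L g] submod_subring[OF R subset_refl]
  unfolding submod_def by auto

lemma colon_msum_smul: "colon R (msum R (smul g R)) = {s \<in> R. g * s \<in> R}"
proof (intro set_eqI iffI)
  fix s assume s: "s \<in> colon R (msum R (smul g R))"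
  have "1 \<in> msum R (smul g R)" "g \<in> msum R (smul g R)"
    using R_zero subringD(2)[OF R] by (force simp: mem_msum_smul)+
  then show "s \<in> {s \<in> R. g * s \<in> R}"
    using s unfolding colon_def by (auto simp: mult.commute)
next
  fix s assume s: "s \<in> {s \<in> R. g * s \<in> R}"
  have "s * (r + g * t) \<in> R" if "r \<in> R" "t \<in> R" for r t
  proof -
    have "s * (r + g * t) = s * r + (g * s) * t"
      by (simp add: algebra_simps)
    then show ?thesis
      using s that R_add R_mult by simp
  qed
  then show "s \<in> colon R (msum R (smul g R))"
    unfolding colon_def by (auto simp: mem_msum_smul)
qed

lemma msum_smul_preimage:
  assumes L: "submod R L" "R \<subseteq> L" "L \<subseteq> msum R (smul g R)"
  shows "msum R (smul g {s \<in> R. g * s \<in> L}) = L"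
proof
  show "msum R (smul g {s \<in> R. g * s \<in> L}) \<subseteq> L"
    by (rule msum_least[OF L(1) L(2)]) (auto simp: smul_def)
  show "L \<subseteq> msum R (smul g {s \<in> R. g * s \<in> L})"
  proof
    fix x assume x: "x \<in> L"
    with L(3) have "x \<in> msum R (smul g R)"
      by blast
    then obtain r s where rs: "r \<in> R" "s \<in> R" "x = r + g * s"
      unfolding mem_msum_smul by blast
    then have "g * s = x - r"
      by simp
    then have "g * s \<in> L"
      using submod_diff[OF R L(1) x] rs(1) L(2) by auto
    with rs show "x \<in> msum R (smul g {s \<in> R. g * s \<in> L})"
      by (auto simp: mem_msum_smul)
  qed
qed

lemma preimage_msum_smul:
  assumes J: "submod R J" "colon R (msum R (smul g R)) \<subseteq> J" "J \<subseteq> R"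
  shows "{s \<in> R. g * s \<in> msum R (smul g J)} = J"
proof
  show "J \<subseteq> {s \<in> R. g * s \<in> msum R (smul g J)}"
    using J(3) R_zero by (force simp: mem_msum_smul)
  show "{s \<in> R. g * s \<in> msum R (smul g J)} \<subseteq> J"
  proof
    fix s assume "s \<in> {s \<in> R. g * s \<in> msum R (smul g J)}"
    then obtain r j where s: "s \<in> R" and rj: "r \<in> R" "j \<in> J" "g * s = r + g * j"
      by (auto simp: mem_msum_smul)
    have "g * (s - j) = r"
      using rj(3) by (simp add: algebra_simps)
    then have "s - j \<in> colon R (msum R (smul g R))"
      using R_diff[OF s] rj J(3) by (auto simp: colon_msum_smul)
    then have "(s - j) + j \<in> J"
      using J(2) submodD(2)[OF J(1)] rj(2) by blast
    then show "s \<in> J"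
      by simp
  qed
qed

lemma len_msum_smul: "len R R (msum R (smul g R)) = len R (colon R (msum R (smul g R))) R"
proof (rule antisym)
  let ?K = "msum R (smul g R)"
  let ?\<Phi> = "\<lambda>L. {s \<in> R. g * s \<in> L}" and ?\<Psi> = "\<lambda>J. msum R (smul g J)"
  have RR: "submod R R"
    by (rule submod_subring[OF R subset_refl])
  have "?\<Phi> ?K = R"
    using R_zero by (force simp: mem_msum_smul)
  moreover have "len R R ?K \<le> len R (?\<Phi> R) (?\<Phi> ?K)"
    by (rule len_le_of_mono_inverse[where \<Psi> = ?\<Psi>])
      (auto simp: submod_preimage_smul msum_smul_preimage)
  ultimately show "len R R ?K \<le> len R (colon R ?K) R"
    by (simp add: colon_msum_smul)
  have "?\<Psi> (colon R ?K) = R"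
  proof
    show "?\<Psi> (colon R ?K) \<subseteq> R"
      unfolding colon_msum_smul by (rule msum_least[OF RR subset_refl]) (auto simp: smul_def)
    show "R \<subseteq> ?\<Psi> (colon R ?K)"
      by (rule msum_superset_left[OF submodD(1)[OF submod_smul[OF submod_colon[OF RR]]]])
  qed
  moreover have "len R (colon R ?K) R \<le> len R (?\<Psi> (colon R ?K)) (?\<Psi> R)"
  proof (rule len_le_of_mono_inverse[where \<Phi> = ?\<Psi> and \<Psi> = ?\<Phi>])
    fix J assume J: "submod R J" "colon R ?K \<subseteq> J" "J \<subseteq> R"
    show "submod R (?\<Psi> J) \<and> ?\<Phi> (?\<Psi> J) = J"
      using submod_msum[OF RR submod_smul[OF J(1)]] preimage_msum_smul[OF J] by simp
  next
    fix J J' :: "'a set" assume "J \<subseteq> J'"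
    then show "?\<Psi> J \<subseteq> ?\<Psi> J'"
      by (intro msum_mono smul_mono subset_refl)
  qed
  ultimately show "len R (colon R ?K) R \<le> len R R ?K"
    by simp
qed

lemma coeff_diff_mem_colon_iff:
  assumes "s \<in> R" "s' \<in> R" "x - g * s \<in> R" "x' - g * s' \<in> R"
  shows "s - s' \<in> colon R (msum R (smul g R)) \<longleftrightarrow> x - x' \<in> R"
proof -
  let ?d = "(x - g * s) - (x' - g * s')"
  have d: "?d \<in> R"
    using assms(3,4) by (rule R_diff)
  have "g * (s - s') = (x - x') - ?d" "x - x' = g * (s - s') + ?d"
    by (simp_all add: algebra_simps)
  then have "g * (s - s') \<in> R \<longleftrightarrow> x - x' \<in> R"
    using d R_diff R_add by metis
  then show ?thesis
    using R_diff[OF assms(1,2)] by (simp add: colon_msum_smul)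
qed

lemma ex_coeff_map: "\<exists>f. \<forall>x\<in>msum R (smul g R). f x \<in> R \<and> x - g * f x \<in> R"
proof -
  have "\<exists>s. s \<in> R \<and> x - g * s \<in> R" if x: "x \<in> msum R (smul g R)" for x
  proof -
    obtain r s where "r \<in> R" "s \<in> R" "x = r + g * s"
      using x unfolding mem_msum_smul by blast
    then show ?thesis
      by auto
  qed
  then show ?thesis
    by metis
qed

lemma quot_iso_msum_smul: "quot_iso R (msum R (smul g R)) R R (colon R (msum R (smul g R)))"
proof -
  let ?K = "msum R (smul g R)"
  have K: "submod R ?K"
    using submod_msum submod_smul submod_subring[OF R subset_refl] by blast
  obtain f where f: "\<And>x. x \<in> ?K \<Longrightarrow> f x \<in> R \<and> x - g * f x \<in> R"
    using ex_coeff_map by blast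
  show ?thesis
    unfolding quot_iso_def
  proof (intro exI[of _ f] conjI ballI)
    fix x assume "x \<in> ?K"
    then show "f x \<in> R"
      using f by blast
  next
    fix x y assume x: "x \<in> ?K" and y: "y \<in> ?K"
    have "x + y - g * (f x + f y) = (x - g * f x) + (y - g * f y)"
      by (simp add: algebra_simps)
    also have "\<dots> \<in> R"
      using f[OF x] f[OF y] R_add by blast
    finally have "x + y - g * (f x + f y) \<in> R" .
    then have "f (x + y) - (f x + f y) \<in> colon R ?K \<longleftrightarrow> (x + y) - (x + y) \<in> R"
      using coeff_diff_mem_colon_iff f[OF submodD(2)[OF K x y]] f[OF x] f[OF y] R_add by blast
    then show "f (x + y) - f x - f y \<in> colon R ?K"
      using R_zero by (simp add: diff_diff_eq)
  next
    fix r x assume r: "r \<in> R" and x: "x \<in> ?K"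
    have "r * x - g * (r * f x) = r * (x - g * f x)"
      by (simp add: algebra_simps)
    also have "\<dots> \<in> R"
      using f[OF x] r R_mult by blast
    finally have "r * x - g * (r * f x) \<in> R" .
    then have "f (r * x) - r * f x \<in> colon R ?K \<longleftrightarrow> r * x - r * x \<in> R"
      using coeff_diff_mem_colon_iff f[OF submodD(3)[OF K r x]] f[OF x] r R_mult by blast
    then show "f (r * x) - r * f x \<in> colon R ?K"
      using R_zero by simp
  next
    fix z assume z: "z \<in> R"
    then have gz: "g * z \<in> ?K"
      using R_zero by (force simp: mem_msum_smul)
    have "g * z - g * z \<in> R"
      using R_zero by simp
    then have "z - f (g * z) \<in> colon R ?K"
      using coeff_diff_mem_colon_iff[of z "f (g * z)" "g * z" "g * z"] f[OF gz] z by blast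
    with gz show "\<exists>x\<in>?K. z - f x \<in> colon R ?K"
      by blast
  next
    fix x assume x: "x \<in> ?K"
    have "0 - g * 0 \<in> R"
      using R_zero by simp
    then have "f x - 0 \<in> colon R ?K \<longleftrightarrow> x - 0 \<in> R"
      using coeff_diff_mem_colon_iff[of "f x" 0 x 0] f[OF x] R_zero by blast
    then show "f x \<in> colon R ?K \<longleftrightarrow> x \<in> R"
      by simp
  qed
qed

end

section \<open>One-dimensional Cohen-Macaulay local rings\<close>

locale cm1_ring =
  fixes R m :: "'a::comm_ring_1 set"
  assumes cm1: "cm1_local R m"
begin

lemma subring_R: "subring R"
  using cm1 unfolding cm1_local_def total_ring_of_fractions_def by blast

lemma nzd_invertible: "nzd_R R s \<Longrightarrow> \<exists>t. s * t = 1"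
  using cm1 unfolding cm1_local_def total_ring_of_fractions_def by blast

lemma fraction_repr: "\<exists>r\<in>R. \<exists>s. nzd_R R s \<and> q * s = r"
  using cm1 unfolding cm1_local_def total_ring_of_fractions_def by blast

lemma ideal_fin_gen: "ideal_of R J \<Longrightarrow> fin_gen R J"
  using cm1 unfolding cm1_local_def noetherian_def by blast

lemma m_ideal: "ideal_of R m" and m_ne_R: "m \<noteq> R"
  and ideal_subset_m: "ideal_of R J \<Longrightarrow> J \<noteq> R \<Longrightarrow> J \<subseteq> m"
  using cm1 unfolding cm1_local_def local_ring_def by blast+

lemma ex_nzd_in_m: "\<exists>x\<in>m. nzd_R R x"
  using cm1 unfolding cm1_local_def by blast

lemma submod_m: "submod R m" and m_subset_R: "m \<subseteq> R"
  using m_ideal unfolding ideal_of_def by blast+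

lemmas zero_in_R = subringD(1)[OF subring_R]
  and one_in_R = subringD(2)[OF subring_R]
  and R_add = subringD(3)[OF subring_R]
  and R_mult = subringD(4)[OF subring_R]

lemma submod_R: "submod R R"
  by (rule submod_subring[OF subring_R subset_refl])

lemma R_diff: "x \<in> R \<Longrightarrow> y \<in> R \<Longrightarrow> x - y \<in> R"
  by (rule submod_diff[OF subring_R submod_R])

lemma one_notin_m: "1 \<notin> m"
proof
  assume "1 \<in> m"
  then have "R \<subseteq> m"
    using submodD(3)[OF submod_m] by (metis mult_1_right subsetI)
  then show False
    using m_subset_R m_ne_R by blast
qed

lemma unit_if_notin_m:
  assumes x: "x \<in> R" "x \<notin> m"
  shows "\<exists>v\<in>R. v * x = 1"
proof (rule ccontr)
  assume no_inverse: "\<not> (\<exists>v\<in>R. v * x = 1)"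
  have "ideal_of R (smul x R)"
    unfolding ideal_of_def using submod_smul[OF submod_R] x(1) R_mult by (auto simp: smul_def)
  moreover have "smul x R \<noteq> R"
  proof
    assume "smul x R = R"
    then have "1 \<in> smul x R"
      using one_in_R by simp
    then show False
      using no_inverse by (auto simp: smul_def mult.commute)
  qed
  ultimately have "smul x R \<subseteq> m"
    by (rule ideal_subset_m)
  moreover have "x \<in> smul x R"
    using smul_memI[OF one_in_R, of x] by simp
  ultimately show False
    using x(2) by blast
qed

lemma one_minus_invertible:
  assumes "x \<in> m"
  shows "\<exists>v\<in>R. v * (1 - x) = 1"
proof (rule unit_if_notin_m)
  show "1 - x \<in> R"
    using R_diff[OF one_in_R] assms m_subset_R by blast
  show "1 - x \<notin> m"
  proof
    assume "1 - x \<in> m"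
    then have "(1 - x) + x \<in> m"
      using submodD(2)[OF submod_m] assms by blast
    then show False
      using one_notin_m by simp
  qed
qed

lemma nzd_regular: "nzd_R R s \<Longrightarrow> regular s"
  using nzd_invertible regular_if_unit by blast

lemma nzd_mult: "nzd_R R s \<Longrightarrow> nzd_R R t \<Longrightarrow> nzd_R R (s * t)"
  unfolding nzd_R_def by (metis R_mult mult.assoc)

lemma regular_invertible:
  assumes "regular (y::'a)"
  shows "\<exists>w. y * w = 1"
proof -
  obtain r s where rs: "r \<in> R" "nzd_R R s" "y * s = r"
    using fraction_repr by blast
  have "nzd_R R r"
    unfolding nzd_R_def
  proof (intro conjI ballI impI)
    show "r \<in> R"
      by fact
    fix z assume "z \<in> R" "r * z = 0"
    then have "y * (s * z) = 0"
      using rs by (metis mult.assoc)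
    then have "s * z = 0"
      using assms unfolding regular_def by blast
    then show "z = 0"
      using rs \<open>z \<in> R\<close> unfolding nzd_R_def by blast
  qed
  then obtain t where "r * t = 1"
    using nzd_invertible by blast
  then have "y * (s * t) = 1"
    using rs by (metis mult.assoc)
  then show ?thesis
    by blast
qed

lemma common_denominator: "finite F \<Longrightarrow> \<exists>s. nzd_R R s \<and> (\<forall>f\<in>F. s * f \<in> R)"
proof (induction F rule: finite_induct)
  case empty
  have "nzd_R R 1"
    unfolding nzd_R_def using one_in_R by simp
  then show ?case
    by blast
next
  case (insert f F)
  then obtain s where s: "nzd_R R s" "\<forall>f\<in>F. s * f \<in> R"
    by blast
  obtain r t where rt: "r \<in> R" "nzd_R R t" "f * t = r"
    using fraction_repr by blast
  have "s \<in> R" "t \<in> R"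
    using s(1) rt(2) unfolding nzd_R_def by auto
  have "(s * t) * f' \<in> R" if "f' \<in> insert f F" for f'
    using that
  proof
    assume "f' = f"
    then have "(s * t) * f' = s * r"
      by (simp add: rt(3)[symmetric] ac_simps)
    then show ?thesis
      using R_mult[OF \<open>s \<in> R\<close> rt(1)] by simp
  next
    assume "f' \<in> F"
    then have "t * (s * f') \<in> R"
      using R_mult \<open>t \<in> R\<close> s(2) by blast
    then show ?thesis
      by (simp add: ac_simps)
  qed
  then show ?case
    using nzd_mult[OF s(1) rt(2)] by blast
qed

lemma fin_gen_denominator:
  assumes "fin_gen R X"
  shows "\<exists>s. nzd_R R s \<and> (\<forall>x\<in>X. s * x \<in> R)"
proof -
  obtain F where F: "finite F" "X = span R F"
    using assms unfolding fin_gen_def by blast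
  obtain s where s: "nzd_R R s" "\<forall>f\<in>F. s * f \<in> R"
    using common_denominator[OF F(1)] by blast
  have "span R F \<subseteq> {x. s * x \<in> R}"
    by (rule span_least[OF submod_preimage_mult[OF submod_R]]) (use s in auto)
  then show ?thesis
    using s F by blast
qed

lemma fin_gen_submod:
  assumes "fin_gen R X" "submod R L" "L \<subseteq> X"
  shows "fin_gen R L"
proof -
  obtain s where s: "nzd_R R s" "\<forall>x\<in>X. s * x \<in> R"
    using fin_gen_denominator[OF assms(1)] by blast
  obtain t where st: "s * t = 1"
    using nzd_invertible[OF s(1)] by blast
  have "ideal_of R (smul s L)"
    unfolding ideal_of_def using submod_smul[OF assms(2)] s assms(3) by (auto simp: smul_def)
  then have "fin_gen R (smul t (smul s L))"
    by (intro fin_gen_smul ideal_fin_gen)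
  then show ?thesis
    by (simp add: smul_cancel[OF st])
qed

lemma setprod_m_subset: "submod R M \<Longrightarrow> setprod R m M \<subseteq> M"
  by (rule setprod_least) (use m_subset_R submodD(3) in blast)+

lemma mem_if_mem_msum_smul_m:
  assumes M: "submod R M" and f: "f \<in> msum M (smul f m)"
  shows "f \<in> M"
proof -
  obtain y x where y: "y \<in> M" and x: "x \<in> m" and "f = y + f * x"
    using f unfolding mem_msum_smul by blast
  then have eq: "(1 - x) * f = y"
    by (simp add: algebra_simps)
  obtain v where "v \<in> R" "v * (1 - x) = 1"
    using one_minus_invertible[OF x] by blast
  then have "f = v * y"
    using eq by (metis mult.assoc mult_1_left)
  then show ?thesis
    using submodD(3)[OF M \<open>v \<in> R\<close> y] by simp
qed

lemma setprod_m_span_insert: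
  "setprod R m (span R (insert f F)) \<subseteq> msum (setprod R m (span R F)) (smul f m)"
proof (rule setprod_least[OF submod_msum[OF submod_setprod submod_smul[OF submod_m]]])
  fix x y assume x: "x \<in> m" and "y \<in> span R (insert f F)"
  then obtain r z where r: "r \<in> R" and z: "z \<in> span R F" and "y = f * r + z"
    unfolding span_insert[OF subring_R] msum_def smul_def by blast
  then have "x * y = x * z + f * (x * r)"
    by (simp add: algebra_simps)
  moreover have "f * (x * r) \<in> smul f m"
    using smul_memI[OF submod_mult_right[OF submod_m r x]] .
  moreover have "x * z \<in> setprod R m (span R F)"
    using setprod_memI[OF x z] .
  ultimately show "x * y \<in> msum (setprod R m (span R F)) (smul f m)"
    unfolding msum_def by blast
qed

lemma nakayama_span:
  assumes "finite F" and N: "submod R N" and "span R F \<subseteq> msum N (setprod R m (span R F))"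
  shows "span R F \<subseteq> N"
  using assms(1,3)
proof (induction F rule: finite_induct)
  case empty
  then show ?case
    using submodD(1)[OF N] by (simp add: span_empty)
next
  case (insert f F)
  let ?M = "span R (insert f F)" and ?M' = "span R F"
  let ?P = "msum N (setprod R m ?M')"
  have P: "submod R ?P"
    by (rule submod_msum[OF N submod_setprod])
  have "?M \<subseteq> msum N (msum (setprod R m ?M') (smul f m))"
    using insert.prems msum_mono[OF subset_refl setprod_m_span_insert] by blast
  then have M: "?M \<subseteq> msum ?P (smul f m)"
    by (simp only: msum_assoc)
  then have "f \<in> ?P"
    using mem_if_mem_msum_smul_m[OF P] span_superset by blast
  then have "smul f m \<subseteq> ?P"
    using submod_mult_right[OF P] m_subset_R by (auto simp: smul_def)
  then have MP: "?M \<subseteq> ?P"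
    using M msum_least[OF P subset_refl] by blast
  have "?M' \<subseteq> ?M"
    by (rule span_least[OF submod_span]) (use span_superset in blast)
  then have "?M' \<subseteq> N"
    using MP insert.IH by blast
  then have "?P \<subseteq> N"
    using msum_least[OF N subset_refl] setprod_m_subset[OF submod_span] by blast
  then show ?case
    using MP by blast
qed

lemma nakayama:
  assumes "fin_gen R M" "submod R N" "M \<subseteq> msum N (setprod R m M)"
  shows "M \<subseteq> N"
  using assms nakayama_span unfolding fin_gen_def by blast

lemma one_notin_setprod_m:
  assumes S: "subring S" "R \<subseteq> S" "fin_gen R S"
  shows "1 \<notin> setprod R m S"
proof
  assume one: "1 \<in> setprod R m S"
  have "S \<subseteq> setprod R m S"
  proof
    fix s assume s: "s \<in> S"
    have "setprod R m S \<subseteq> {w. s * w \<in> setprod R m S}"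
    proof (rule setprod_least[OF submod_preimage_mult[OF submod_setprod]])
      fix x t assume "x \<in> m" "t \<in> S"
      then have "x * (s * t) \<in> setprod R m S"
        using setprod_memI subringD(4)[OF S(1) s] by blast
      then show "x * t \<in> {w. s * w \<in> setprod R m S}"
        by (simp add: ac_simps)
    qed
    then show "s \<in> setprod R m S"
      using one by auto
  qed
  then have "S \<subseteq> msum {0} (setprod R m S)"
    using msum_superset_right[of "{0}"] by blast
  then have "S \<subseteq> {0}"
    using nakayama[OF S(3) submod_zero] by blast
  then have "(1::'a) = 0"
    using S(2) one_in_R by blast
  then show False
    using one_notin_m submodD(1)[OF submod_m] by simp
qed

lemma frac_ideal_R: "frac_ideal R R"
proof -
  have "span R {1} = R"
  proof (rule span_unique[OF submod_R])
    show "{1} \<subseteq> R"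
      using one_in_R by simp
    fix N assume "submod R N" "{1} \<subseteq> N"
    then show "R \<subseteq> N"
      using submodD(3) by fastforce
  qed
  then have "fin_gen R R"
    unfolding fin_gen_def by blast
  then show ?thesis
    unfolding frac_ideal_def using submod_R one_in_R regular_if_unit[of 1 1] by auto
qed

lemma frac_ideal_m: "frac_ideal R m"
  using submod_m ideal_fin_gen[OF m_ideal] ex_nzd_in_m nzd_regular unfolding frac_ideal_def by blast

lemma frac_ideal_colon:
  assumes C: "frac_ideal R C" and X: "frac_ideal R X"
  shows "frac_ideal R (colon C X)"
proof -
  have CC: "submod R C" "fin_gen R C"
    using C unfolding frac_ideal_def by auto
  obtain c where c: "c \<in> C" "regular c"
    using C unfolding frac_ideal_def by blast
  obtain y where y: "y \<in> X" "regular y"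
    using X unfolding frac_ideal_def by blast
  obtain w where w: "y * w = 1"
    using regular_invertible[OF y(2)] by blast
  obtain s where s: "nzd_R R s" "\<forall>x\<in>X. s * x \<in> R"
    using fin_gen_denominator X unfolding frac_ideal_def by blast
  have sub: "submod R (colon C X)"
    by (rule submod_colon[OF CC(1)])
  have "(s * x) * c \<in> C" if "x \<in> X" for x
    using submodD(3)[OF CC(1) _ c(1)] s(2) that by blast
  then have "c * s \<in> colon C X"
    unfolding colon_def by (simp add: ac_simps)
  moreover have "regular (c * s)"
    using regular_mult[OF c(2) nzd_regular[OF s(1)]] .
  moreover have "colon C X \<subseteq> smul w C"
  proof
    fix z assume "z \<in> colon C X"
    then have "z * y \<in> C"
      using y(1) unfolding colon_def by blast
    moreover have "z = w * (z * y)"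
      using w by (metis mult.commute mult.left_commute mult_1_right)
    ultimately show "z \<in> smul w C"
      by (metis smul_memI)
  qed
  then have "fin_gen R (colon C X)"
    by (rule fin_gen_submod[OF fin_gen_smul[OF CC(2)] sub])
  ultimately show ?thesis
    using sub unfolding frac_ideal_def by blast
qed

lemma frac_ideal_between:
  assumes X: "frac_ideal R X" and Y: "frac_ideal R Y" and L: "submod R L" "Y \<subseteq> L" "L \<subseteq> X"
  shows "frac_ideal R L"
proof -
  have "fin_gen R L"
    using fin_gen_submod[OF _ L(1) L(3)] X unfolding frac_ideal_def by blast
  moreover obtain y where "y \<in> Y" "regular y"
    using Y unfolding frac_ideal_def by blast
  ultimately show ?thesis
    using L unfolding frac_ideal_def by blast
qed

lemma len_colon_canonical:
  assumes C: "canonical_frac_ideal R C" and X: "frac_ideal R X" and Y: "frac_ideal R Y"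
  shows "len R Y X = len R (colon C X) (colon C Y)"
proof (rule antisym)
  have CC: "frac_ideal R C" "submod R C"
    using C unfolding canonical_frac_ideal_def frac_ideal_def by auto
  have dual: "\<And>J. frac_ideal R J \<Longrightarrow> colon C (colon C J) = J"
    using C unfolding canonical_frac_ideal_def by blast
  have le: "len R Y' X' \<le> len R (colon C X') (colon C Y')"
    if X': "frac_ideal R X'" and Y': "frac_ideal R Y'" for X' Y'
  proof (rule len_le_of_antimono_inverse[where \<Psi> = "colon C"])
    fix L assume "submod R L" "Y' \<subseteq> L" "L \<subseteq> X'"
    then show "submod R (colon C L) \<and> colon C (colon C L) = L"
      using dual frac_ideal_between[OF X' Y'] submod_colon[OF CC(2)] by blast
  qed (rule colon_antimono)
  show "len R Y X \<le> len R (colon C X) (colon C Y)"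
    by (rule le[OF X Y])
  have "len R (colon C X) (colon C Y) \<le> len R (colon C (colon C Y)) (colon C (colon C X))"
    by (rule le[OF frac_ideal_colon[OF CC(1) Y] frac_ideal_colon[OF CC(1) X]])
  then show "len R (colon C X) (colon C Y) \<le> len R Y X"
    using dual X Y by simp
qed

lemma colon_R_R: "colon R R = R"
proof
  show "colon R R \<subseteq> R"
    unfolding colon_def using one_in_R by force
  show "R \<subseteq> colon R R"
    unfolding colon_def using R_mult by blast
qed

lemma len_m_R_le_one: "len R m R \<le> 1"
proof -
  have "n \<le> 1" if c: "mod_chain R c n m R" for c n
  proof (rule ccontr)
    assume "\<not> n \<le> 1"
    then have "c 0 \<subset> c 1" "c 1 \<subset> c 2" "c 1 \<subseteq> R" "submod R (c 1)"
      using c mod_chain_between[OF c, of 1] unfolding mod_chain_def by (auto simp: numeral_2_eq_2)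
    moreover have "c 2 \<subseteq> R"
      using mod_chain_between[OF c, of 2] \<open>\<not> n \<le> 1\<close> by simp
    moreover have "c 0 = m"
      using c unfolding mod_chain_def by simp
    ultimately have "ideal_of R (c 1)" "c 1 \<noteq> R" "\<not> c 1 \<subseteq> m"
      unfolding ideal_of_def by auto
    then show False
      using ideal_subset_m by blast
  qed
  then show ?thesis
    using len_le_bound[of R m R 1] by (simp add: one_enat_def)
qed

lemma len_R_colon_m:
  assumes "cm_type R m t"
  shows "len R R (colon R m) = t"
proof -
  obtain x where x: "x \<in> m" "nzd_R R x"
    using ex_nzd_in_m by blast
  obtain y where xy: "x * y = 1"
    using nzd_invertible[OF x(2)] by blast
  have "principal R x = smul x R"
    by (rule principal_eq_smul)
  moreover have "colon (smul x R) m \<inter> R = smul x (colon R m)"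
  proof -
    have "smul x (colon R m) \<subseteq> R"
      unfolding smul_def colon_def using x(1) by (auto simp: mult.commute)
    then show ?thesis
      using colon_smul_left[OF xy] by auto
  qed
  moreover have "len R (principal R x) (colon (principal R x) m \<inter> R) = t"
    using assms x unfolding cm_type_def by blast
  ultimately show ?thesis
    by (simp add: len_smul[OF xy])
qed

lemma cm_type_le_one:
  assumes "canonical_frac_ideal R R" "cm_type R m t"
  shows "t \<le> 1"
proof -
  have "len R m R = len R (colon R R) (colon R m)"
    by (rule len_colon_canonical[OF assms(1) frac_ideal_R frac_ideal_m])
  then show ?thesis
    using len_R_colon_m[OF assms(2)] colon_R_R len_m_R_le_one by simp
qed

end

section \<open>Canonical ideals over rings of type two\<close>

lemma (in cm1_ring) nzd_power: "nzd_R R x \<Longrightarrow> nzd_R R (x ^ n)"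
proof (induction n)
  case 0
  then show ?case
    unfolding nzd_R_def using one_in_R by simp
next
  case (Suc n)
  then show ?case
    using nzd_mult by simp
qed

locale type_two_canonical = cm1_ring +
  fixes I :: "'a::comm_ring_1 set" and a :: 'a
  assumes ideal_I: "ideal_of R I"
    and canonical_I: "canonical_frac_ideal R I"
    and parameter_a: "parameter R m a"
    and reduction_a: "reduction R a I"
    and type_two: "cm_type R m 2"
begin

abbreviation K where "K \<equiv> frac_div I a"

abbreviation S where "S \<equiv> ring_gen R K"

lemma a_nzd: "nzd_R R a"
proof -
  obtain x where x: "x \<in> m" "nzd_R R x"
    using ex_nzd_in_m by blast
  obtain n where "mpow R m n \<subseteq> principal R a"
    using parameter_a unfolding parameter_def by blast
  then obtain r where r: "x ^ n = r * a"
    using pow_in_mpow[OF one_in_R x(1)] unfolding principal_def by blast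
  show ?thesis
    unfolding nzd_R_def
  proof (intro conjI ballI impI)
    show "a \<in> R"
      using parameter_a m_subset_R unfolding parameter_def by blast
    fix y assume "y \<in> R" "a * y = 0"
    then show "y = 0"
      using nzd_power[OF x(2), of n] r unfolding nzd_R_def by (metis mult.assoc mult_zero_right)
  qed
qed

lemma a_invertible: "\<exists>u. a * u = 1"
  using nzd_invertible[OF a_nzd] .

lemma I_eq_smul_K: "I = smul a K"
proof -
  obtain u where au: "a * u = 1"
    using a_invertible by blast
  then show ?thesis
    using frac_div_eq_smul[OF au] by (simp add: smul_smul smul_one)
qed

lemma submod_I: "submod R I"
  using ideal_I unfolding ideal_of_def by blast

lemma submod_K: "submod R K"
  using a_invertible frac_div_eq_smul submod_smul[OF submod_I] by metis

lemma R_subset_K: "R \<subseteq> K"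
proof
  fix r assume "r \<in> R"
  moreover have "a \<in> I"
    using reduction_a one_in_R unfolding reduction_def principal_def by force
  ultimately have "r * a \<in> I"
    using submodD(3)[OF submod_I] by blast
  then show "r \<in> K"
    unfolding frac_div_def by (simp add: mult.commute)
qed

lemma canonical_K: "canonical_frac_ideal R K"
proof -
  obtain u where au: "a * u = 1"
    using a_invertible by blast
  then have "u * a = 1"
    by (simp add: mult.commute)
  then show ?thesis
    unfolding frac_div_eq_smul[OF au] by (rule canonical_frac_ideal_smul[OF _ canonical_I])
qed

lemma frac_ideal_K: "frac_ideal R K"
  using canonical_K unfolding canonical_frac_ideal_def by blast

lemma colon_K_dual: "frac_ideal R J \<Longrightarrow> colon K (colon K J) = J"
  using canonical_K unfolding canonical_frac_ideal_def by blast

lemma colon_K_K: "colon K K = R"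
proof -
  have "colon K R = K"
  proof
    show "colon K R \<subseteq> K"
      unfolding colon_def using one_in_R by force
    show "K \<subseteq> colon K R"
      unfolding colon_def using submod_mult_right[OF submod_K] by blast
  qed
  then show ?thesis
    using colon_K_dual[OF frac_ideal_R] by simp
qed

lemma K_not_principal:
  assumes "g * h = 1"
  shows "K \<noteq> smul g R"
proof
  assume K: "K = smul g R"
  have "h * g = 1"
    using assms by (simp add: mult.commute)
  then have "canonical_frac_ideal R (smul h K)"
    by (rule canonical_frac_ideal_smul[OF _ canonical_K])
  then have "canonical_frac_ideal R R"
    unfolding K by (simp add: smul_cancel[OF assms])
  then show False
    using cm_type_le_one type_two by fastforce
qed

lemma K_ne_R: "K \<noteq> R"
  using K_not_principal[of 1 1] by (simp add: smul_one)

lemma R_subset_mpow_K: "R \<subseteq> mpow R K n"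
  using mpow_mono[OF subring_R R_subset_K, of 0 n] by simp

lemma frac_ideal_mpow_K: "frac_ideal R (mpow R K n)"
proof -
  obtain u where au: "a * u = 1"
    using a_invertible by blast
  have "fin_gen R (mpow R I n)"
    by (rule ideal_fin_gen[OF ideal_mpow[OF subring_R ideal_I]])
  moreover have "mpow R K n = smul (u ^ n) (mpow R I n)"
    by (simp only: frac_div_eq_smul[OF au] mpow_smul)
  ultimately have "fin_gen R (mpow R K n)"
    using fin_gen_smul by metis
  moreover have "1 \<in> mpow R K n"
    using R_subset_mpow_K one_in_R by blast
  ultimately show ?thesis
    unfolding frac_ideal_def using submod_mpow[OF subring_R] regular_if_unit[of 1 1] by auto
qed

lemma mpow_I_eq: "mpow R I k = smul (a ^ k) (mpow R K k)"
proof -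
  \<comment> \<open>\<open>I_eq_smul_K\<close> cannot be used for rewriting, as \<open>K\<close> itself contains \<open>I\<close>.\<close>
  have "mpow R I k = mpow R (smul a K) k"
    using I_eq_smul_K by (rule arg_cong[where f = "\<lambda>X. mpow R X k"])
  then show ?thesis
    by (simp only: mpow_smul)
qed

lemma mpow_K_stable: "\<exists>N. mpow R K (Suc N) = mpow R K N"
proof -
  obtain n where n: "mpow R I (Suc n) = setprod R (principal R a) (mpow R I n)"
    using reduction_a unfolding reduction_def by blast
  obtain u where "a * u = 1"
    using a_invertible by blast
  then have unit: "a ^ Suc n * u ^ Suc n = 1"
    by (metis power_mult_distrib power_one)
  have "principal R a = smul a R"
    by (rule principal_eq_smul)
  then have "smul (a ^ Suc n) (mpow R K (Suc n)) = setprod R (smul a R) (smul (a ^ n) (mpow R K n))"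
    using n by (simp only: mpow_I_eq)
  also have "\<dots> = smul (a ^ Suc n) (setprod R R (mpow R K n))"
    by (simp add: setprod_smul)
  finally have "mpow R K (Suc n) = setprod R R (mpow R K n)"
    using smul_cancel[OF unit] by metis
  then show ?thesis
    using setprod_subring_left[OF subring_R submod_mpow[OF subring_R]] by auto
qed

lemma S_eq_mpow_K: "\<exists>N. S = mpow R K N \<and> mpow R K (Suc N) = mpow R K N"
  using mpow_K_stable ring_gen_eq_mpow[OF subring_R R_subset_K] by blast

lemma frac_ideal_S: "frac_ideal R S"
  using S_eq_mpow_K frac_ideal_mpow_K by metis

lemma one_notin_mK: "1 \<notin> setprod R m K"
proof -
  have "fin_gen R S"
    using frac_ideal_S unfolding frac_ideal_def by blast
  then have "1 \<notin> setprod R m S"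
    using one_notin_setprod_m[OF subring_ring_gen] ring_gen_superset by blast
  moreover have "setprod R m K \<subseteq> setprod R m S"
    using setprod_mono ring_gen_superset by blast
  ultimately show ?thesis
    by blast
qed

lemma len_mK_K: "len R (setprod R m K) K = 2"
proof -
  obtain x where x: "x \<in> m" "nzd_R R x"
    using ex_nzd_in_m by blast
  have mK: "setprod R m K \<subseteq> K"
    by (rule setprod_m_subset[OF submod_K])
  have "x * 1 \<in> setprod R m K"
    using setprod_memI[OF x(1)] R_subset_K one_in_R by blast
  moreover have "fin_gen R (setprod R m K)"
    using fin_gen_submod[OF _ submod_setprod mK] frac_ideal_K unfolding frac_ideal_def by blast
  ultimately have "frac_ideal R (setprod R m K)"
    unfolding frac_ideal_def using submod_setprod nzd_regular[OF x(2)] by auto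
  then have "len R (setprod R m K) K = len R (colon K K) (colon K (setprod R K m))"
    using len_colon_canonical[OF canonical_K frac_ideal_K] setprod_commute by metis
  also have "\<dots> = len R R (colon R m)"
    by (simp add: colon_setprod[OF submod_K] colon_K_K)
  finally show ?thesis
    using len_R_colon_m[OF type_two] by simp
qed

lemma K_two_generated_mod_mK: "\<exists>g\<in>K. K = msum (msum R (smul g R)) (setprod R m K)"
proof -
  let ?mK = "setprod R m K"
  let ?N = "msum R ?mK"
  have mK: "submod R ?mK" "?mK \<subseteq> K"
    by (rule submod_setprod) (rule setprod_m_subset[OF submod_K])
  have N: "submod R ?N" "?N \<subseteq> K"
    by (rule submod_msum[OF submod_R mK(1)]) (rule msum_least[OF submod_K R_subset_K mK(2)])
  have mK_N: "?mK \<subset> ?N"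
    using msum_superset_right[OF zero_in_R, of ?mK] msum_superset_left[OF submodD(1)[OF mK(1)], of R]
      one_in_R one_notin_mK by blast
  have "?N \<noteq> K"
  proof
    assume "?N = K"
    then have "K \<subseteq> R"
      using nakayama[OF _ submod_R] frac_ideal_K unfolding frac_ideal_def by simp
    then show False
      using R_subset_K K_ne_R by blast
  qed
  then obtain g where g: "g \<in> K" "g \<notin> ?N"
    using N(2) by blast
  have gR: "submod R (smul g R)" "smul g R \<subseteq> K" "g \<in> smul g R"
    using submod_smul[OF submod_R] submod_mult_right[OF submod_K _ g(1)] smul_memI[OF one_in_R, of g]
    by (auto simp: smul_def)
  let ?N' = "msum ?N (smul g R)"
  have N': "submod R ?N'" "?N' \<subseteq> K"
    by (rule submod_msum[OF N(1) gR(1)]) (rule msum_least[OF submod_K N(2) gR(2)])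
  have "?N \<subset> ?N'"
    using msum_superset_left[OF submodD(1)[OF gR(1)], of ?N]
      msum_superset_right[OF submodD(1)[OF N(1)], of "smul g R"] g(2) gR(3) by blast
  then have "?N' = K"
    using three_le_len[OF mK(1) N(1) N'(1) submod_K mK_N] N'(2) len_mK_K by fastforce
  moreover have "msum (msum R (smul g R)) ?mK = ?N'"
    by (simp only: msum_assoc msum_commute[of "smul g R"])
  ultimately show ?thesis
    using g(1) by auto
qed

lemma K_two_generated: "\<exists>g. K = msum R (smul g R)"
proof -
  obtain g where g: "g \<in> K" and K: "K = msum (msum R (smul g R)) (setprod R m K)"
    using K_two_generated_mod_mK by blast
  have gR: "submod R (smul g R)" "smul g R \<subseteq> K"
    using submod_smul[OF submod_R] submod_mult_right[OF submod_K _ g] by (auto simp: smul_def)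
  have "K \<subseteq> msum R (smul g R)"
    using nakayama[OF _ submod_msum[OF submod_R gR(1)] equalityD1[OF K]] frac_ideal_K
    unfolding frac_ideal_def by blast
  moreover have "msum R (smul g R) \<subseteq> K"
    by (rule msum_least[OF submod_K R_subset_K gR(2)])
  ultimately show ?thesis
    by blast
qed

lemma len_R_K: "len R R K = len R (colon R K) R"
proof -
  obtain g where "K = msum R (smul g R)"
    using K_two_generated by blast
  then show ?thesis
    by (simp add: len_msum_smul[OF subring_R])
qed

lemma quot_iso_K: "quot_iso R K R R (colon R K)"
proof -
  obtain g where "K = msum R (smul g R)"
    using K_two_generated by blast
  then show ?thesis
    by (simp add: quot_iso_msum_smul[OF subring_R])
qed

lemma colon_K_mpow_Suc: "colon K (mpow R K (Suc n)) = colon R (mpow R K n)"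
  by (simp add: colon_setprod[OF submod_K] colon_K_K)

lemma K_square: "mpow R K 2 = setprod R K K"
  by (rule mpow_two[OF subring_R submod_K])

lemma colon_K_square: "colon K (setprod R K K) = colon R K"
  using colon_K_mpow_Suc[of 1] mpow_one[OF subring_R submod_K] K_square by (simp add: numeral_2_eq_2)

lemma colon_K_S: "colon K S = colon R S"
proof -
  obtain N where "S = mpow R K N" "mpow R K (Suc N) = mpow R K N"
    using S_eq_mpow_K by blast
  then show ?thesis
    using colon_K_mpow_Suc[of N] by simp
qed

lemma two_AGL_iff_len_conductor: "two_AGL R I a \<longleftrightarrow> len R (colon R S) R = 2"
proof -
  have "len R K S = len R (colon K S) (colon K K)"
    by (rule len_colon_canonical[OF canonical_K frac_ideal_S frac_ideal_K])
  then show ?thesis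
    unfolding two_AGL_def by (simp add: colon_K_S colon_K_K)
qed

lemma conductor_eq_iff_S_eq_square: "colon R S = colon R K \<longleftrightarrow> S = setprod R K K"
proof
  assume "colon R S = colon R K"
  then have "colon K (colon K S) = colon K (colon K (setprod R K K))"
    by (simp add: colon_K_S colon_K_square)
  then show "S = setprod R K K"
    using colon_K_dual frac_ideal_S frac_ideal_mpow_K[of 2] K_square by simp
next
  assume "S = setprod R K K"
  then show "colon R S = colon R K"
    using colon_K_S colon_K_square by simp
qed

lemma colon_R_K_subset_m: "colon R K \<subseteq> m"
proof (rule ideal_subset_m)
  have "colon R K \<subseteq> R"
    unfolding colon_def using R_subset_K one_in_R by fastforce
  then show "ideal_of R (colon R K)"
    unfolding ideal_of_def using submod_colon[OF submod_R] by blast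
  show "colon R K \<noteq> R"
  proof
    assume "colon R K = R"
    then have "1 \<in> colon R K"
      using one_in_R by simp
    then have "K \<subseteq> R"
      unfolding colon_def by auto
    then show False
      using R_subset_K K_ne_R by blast
  qed
qed

lemma mult_mem_m_if_colon_eq_m:
  assumes "colon R K = m" "x \<in> m" "k \<in> K"
  shows "x * k \<in> m"
proof (rule ccontr)
  assume "x * k \<notin> m"
  moreover have "x * k \<in> R"
    using assms unfolding colon_def by blast
  ultimately obtain v where v: "v \<in> R" "v * (x * k) = 1"
    using unit_if_notin_m by blast
  have "K = smul (v * k) R"
  proof
    show "K \<subseteq> smul (v * k) R"
    proof
      fix y assume "y \<in> K"
      then have "x * y \<in> R"
        using assms(1,2) unfolding colon_def by blast
      moreover have "y = (v * k) * (x * y)"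
        using v(2) by (metis mult.commute mult.left_commute mult_1_right)
      ultimately show "y \<in> smul (v * k) R"
        by (metis smul_memI)
    qed
    show "smul (v * k) R \<subseteq> K"
      using submodD(3)[OF submod_K R_mult[OF v(1)] assms(3)] by (auto simp: smul_def ac_simps)
  qed
  moreover have "(v * k) * x = 1"
    using v(2) by (simp add: ac_simps)
  ultimately show False
    using K_not_principal by blast
qed

lemma conductor_eq_if_colon_eq_m:
  assumes colon_eq: "colon R K = m"
  shows "colon R S = colon R K"
proof -
  have K2: "colon R (mpow R K 2) = m"
  proof
    have "colon R (mpow R K 2) = colon m K"
      unfolding K_square colon_setprod[OF submod_R] colon_eq ..
    then show "colon R (mpow R K 2) \<subseteq> m" "m \<subseteq> colon R (mpow R K 2)"
      using colon_eq m_subset_R mult_mem_m_if_colon_eq_m[OF colon_eq] unfolding colon_def by auto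
  qed
  have "colon K (mpow R K (Suc 2)) = colon K (mpow R K 2)"
    using colon_K_mpow_Suc[of 2] colon_K_mpow_Suc[of 1] mpow_one[OF subring_R submod_K] K2 colon_eq
    by (simp add: numeral_2_eq_2)
  then have "mpow R K (Suc 2) = mpow R K 2"
    using colon_K_dual frac_ideal_mpow_K by metis
  then have "S = mpow R K 2"
    by (rule ring_gen_eq_mpow[OF subring_R R_subset_K])
  then show ?thesis
    using K2 colon_eq by simp
qed

lemma conductor_eq_if_len_two:
  assumes len: "len R (colon R S) R = 2"
  shows "colon R S = colon R K"
proof (rule ccontr)
  assume ne: "colon R S \<noteq> colon R K"
  have "colon R S \<subseteq> colon R K"
    by (rule colon_antimono) (use ring_gen_superset in blast)
  have "colon R K = m"
  proof (rule ccontr)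
    assume "colon R K \<noteq> m"
    then have "3 \<le> len R (colon R S) R"
      using three_le_len[OF submod_colon[OF submod_R] submod_colon[OF submod_R] submod_m submod_R]
        \<open>colon R S \<subseteq> colon R K\<close> ne colon_R_K_subset_m m_subset_R m_ne_R
      by blast
    then show False
      using len by simp
  qed
  then show False
    using conductor_eq_if_colon_eq_m ne by blast
qed

lemma two_AGL_iff_conductor: "two_AGL R I a \<longleftrightarrow> colon R S = colon R K \<and> len R R K = 2"
  using two_AGL_iff_len_conductor conductor_eq_if_len_two len_R_K by auto

end

theorem proposition3p7:
  fixes R m I :: "'a::comm_ring_1 set" and a :: 'a
  assumes "cm1_local R m"
    and "ideal_of R I" and "I \<noteq> R"
    and "canonical_frac_ideal R I"
    and "parameter R m a" and "reduction R a I"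
    and "cm_type R m 2"
  defines "K \<equiv> frac_div I a"
  defines "S \<equiv> ring_gen R K"
  defines "c \<equiv> colon R S"
  shows "(two_AGL R I a \<longleftrightarrow> (c = colon R K \<and> len R R K = 2))
    \<and> (two_AGL R I a \<longleftrightarrow> (S = setprod R K K \<and> len R R K = 2))
    \<and> (two_AGL R I a \<longrightarrow> quot_iso R K R R c)"
proof -
  interpret T: type_two_canonical R m I a
    by unfold_locales (use assms in auto)
  show ?thesis
    unfolding c_def S_def K_def
    using T.two_AGL_iff_conductor T.conductor_eq_iff_S_eq_square T.quot_iso_K by auto
qed

end
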